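(* Let $\epsilon>0$ and $\alpha>0$ be constants. There exists a constant $\delta>0$ such that, for all sufficiently large $n$, if $V\subseteq\mathbb{Z}_2^{2n}$ is a uniformly random subspace of dimension $m\ge\alpha n$, then $\Pr[\dim(\mathrm{rad}(V))\ge\epsilon n]\le2^{-\delta n^2}$.
   Context: Symplectic inner product on $\mathbb{Z}_2^{2n}$: $(\mathbf a,\mathbf b)\odot(\mathbf a',\mathbf b')=\mathbf a\cdot\mathbf b'+\mathbf a'\cdot\mathbf b\pmod2$. For a subspace $V$, $V^\perp=\{\mathbf v:\mathbf v\odot\mathbf w=0\ \forall\mathbf w\in V\}$, and the radical is $\mathrm{rad}(V):=V\cap V^\perp$. *)

theory Defs
  imports Complex_Main "HOL.Vector_Spaces" "HOL-Library.Z2" "HOL-Library.Function_Algebras"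
begin

text \<open>Vectors of Z_2^{2n} are modelled as functions nat => bit vanishing outside {..<2n};
  coordinates 0..n-1 form the a-part, coordinates n..2n-1 the b-part.\<close>

definition scaleZ2 :: "bit \<Rightarrow> (nat \<Rightarrow> bit) \<Rightarrow> (nat \<Rightarrow> bit)" where
  "scaleZ2 c v = (\<lambda>i. c * v i)"

definition ambient :: "nat \<Rightarrow> (nat \<Rightarrow> bit) set" where
  "ambient n = {v. \<forall>i\<ge>2*n. v i = 0}"

definition symp :: "nat \<Rightarrow> (nat \<Rightarrow> bit) \<Rightarrow> (nat \<Rightarrow> bit) \<Rightarrow> bit" where
  "symp n v w = (\<Sum>i<n. v i * w (n+i) + w i * v (n+i))"

definition sperp :: "nat \<Rightarrow> (nat \<Rightarrow> bit) set \<Rightarrow> (nat \<Rightarrow> bit) set" where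
  "sperp n V = {u \<in> ambient n. \<forall>w\<in>V. symp n u w = 0}"

definition rad :: "nat \<Rightarrow> (nat \<Rightarrow> bit) set \<Rightarrow> (nat \<Rightarrow> bit) set" where
  "rad n V = V \<inter> sperp n V"

interpretation Z2vs: vector_space scaleZ2
  by unfold_locales (auto simp: scaleZ2_def fun_eq_iff algebra_simps)

abbreviation subspZ2 :: "(nat \<Rightarrow> bit) set \<Rightarrow> bool" where
  "subspZ2 \<equiv> Z2vs.subspace"

abbreviation dimZ2 :: "(nat \<Rightarrow> bit) set \<Rightarrow> nat" where
  "dimZ2 \<equiv> Z2vs.dim"

text \<open>The set of subspaces of Z_2^{2n} of dimension m (uniform distribution on it).\<close>
definition subspaces_dim :: "nat \<Rightarrow> nat \<Rightarrow> (nat \<Rightarrow> bit) set set" where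
  "subspaces_dim n m = {V. V \<subseteq> ambient n \<and> subspZ2 V \<and> dimZ2 V = m}"

end

theory Submission
  imports Defs "HOL-Library.FuncSet"
begin

(*
  Count ordered bases.  If V has dimension m and its radical has dimension at least k,
  then V has at least 2^(k(k-1) + (m-k)(m-1)) ordered bases x_0, ..., x_(m-1) whose first
  k vectors lie in rad V.  Every such basis is a list in which x_i is orthogonal to
  x_0, ..., x_(min(i,k)-1) and the first k vectors are independent; by nondegeneracy of
  the form there are at most the product of the 2^(2n - min(i,k)) such lists, and a list
  is a basis of only one subspace.  Since there are at least 2^(m(2n-1) - m^2) subspaces
  of dimension m, the proportion of those with a radical of dimension at least k is at
  most 2^(2m - k(k-1)/2) <= 2^(5n - k^2/2), which is below 2^(-eps^2 n^2/4) as soon as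
  k >= eps n and n >= 20/eps^2.
*)

section \<open>The symplectic form\<close>

lemma plus_self_bit_fun [simp]: "(x :: nat \<Rightarrow> bit) + x = 0"
  by (auto simp: fun_eq_iff)

lemma minus_bit_fun_eq_plus: "(x :: nat \<Rightarrow> bit) - y = x + y"
  by (auto simp: fun_eq_iff)

lemma scaleZ2_0 [simp]: "scaleZ2 0 x = 0"
  and scaleZ2_1 [simp]: "scaleZ2 1 x = x"
  by (auto simp: scaleZ2_def fun_eq_iff)

lemma symp_add_left: "symp n (u + v) w = symp n u w + symp n v w"
  by (simp add: symp_def sum.distrib[symmetric] algebra_simps del: add_bit_eq_xor mult_bit_eq_and)

lemma symp_add_right: "symp n w (u + v) = symp n w u + symp n w v"
  by (simp add: symp_def sum.distrib[symmetric] algebra_simps del: add_bit_eq_xor mult_bit_eq_and)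

lemma symp_commute: "symp n u w = symp n w u"
  unfolding symp_def by (rule sum.cong) (simp_all add: algebra_simps del: add_bit_eq_xor mult_bit_eq_and)

lemma symp_scaleZ2_left: "symp n (scaleZ2 c u) w = c * symp n u w"
  by (cases c) (simp_all add: symp_def)

lemma symp_zero_left [simp]: "symp n 0 w = 0"
  by (simp add: symp_def)

lemma subspace_ambient: "subspZ2 (ambient n)"
  by (auto simp: Z2vs.subspace_def ambient_def scaleZ2_def)

lemma subspace_sperp: "subspZ2 (sperp n V)"
  using subspace_ambient[of n]
  by (auto simp: Z2vs.subspace_def sperp_def symp_add_left symp_scaleZ2_left)

lemma subspace_rad: "subspZ2 V \<Longrightarrow> subspZ2 (rad n V)"
  unfolding rad_def by (intro Z2vs.subspace_inter subspace_sperp)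

lemma sperp_empty [simp]: "sperp n {} = ambient n"
  by (simp add: sperp_def)

lemma card_ambient: "card (ambient n) = 2 ^ (2 * n)"
proof -
  have "bij_betw (\<lambda>v. restrict v {..<2*n}) (ambient n) ({..<2*n} \<rightarrow>\<^sub>E (UNIV :: bit set))"
  proof (rule bij_betw_imageI)
    show "inj_on (\<lambda>v. restrict v {..<2*n}) (ambient n)"
      by (auto simp: inj_on_def ambient_def fun_eq_iff restrict_def) (metis not_le)
    show "(\<lambda>v. restrict v {..<2*n}) ` ambient n = {..<2*n} \<rightarrow>\<^sub>E UNIV"
    proof (intro subset_antisym subsetI)
      fix f :: "nat \<Rightarrow> bit"
      assume f: "f \<in> {..<2*n} \<rightarrow>\<^sub>E UNIV"
      let ?g = "\<lambda>i. if i < 2*n then f i else 0"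
      have "?g \<in> ambient n" by (auto simp: ambient_def)
      moreover have "restrict ?g {..<2*n} = f"
        using f by (auto simp: fun_eq_iff restrict_def PiE_def extensional_def)
      ultimately show "f \<in> (\<lambda>v. restrict v {..<2*n}) ` ambient n"
        by (intro image_eqI[where x = ?g]) simp_all
    qed (clarsimp simp: restrict_PiE_iff)
  qed
  moreover have "card (UNIV :: bit set) = 2"
  proof -
    have UNIV_bit: "(UNIV :: bit set) = {0, 1}"
      using bit_not_zero_iff by blast
    show ?thesis
      unfolding UNIV_bit by simp
  qed
  ultimately show ?thesis
    by (simp add: bij_betw_same_card[of _ "ambient n"] card_PiE)
qed

lemma finite_ambient: "finite (ambient n)"
  using card_ambient by (metis card.infinite power_not_zero zero_neq_numeral)

lemma symp_nondegenerate:
  assumes "a \<in> ambient n" "a \<noteq> 0"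
  obtains w where "w \<in> ambient n" "symp n w a = 1"
proof -
  obtain j where j: "a j = 1"
    using assms(2) by (auto simp: fun_eq_iff)
  with assms(1) have "j < 2 * n"
    by (auto simp: ambient_def) (metis not_le zero_neq_one)
  show ?thesis
  proof (cases "j < n")
    case True
    define w where "w i = (if i = n + j then 1 else 0 :: bit)" for i
    have "symp n w a = (\<Sum>i<n. if i = j then a i else 0)"
      unfolding symp_def by (rule sum.cong) (auto simp: w_def)
    moreover have "w \<in> ambient n"
      using True by (auto simp: ambient_def w_def)
    ultimately show ?thesis
      using True j that by simp
  next
    case False
    define w where "w i = (if i = j - n then 1 else 0 :: bit)" for i
    have "symp n w a = (\<Sum>i<n. if i = j - n then a j else 0)"
      unfolding symp_def by (rule sum.cong) (use False \<open>j < 2 * n\<close> in \<open>auto simp: w_def\<close>)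
    moreover have "w \<in> ambient n"
      using False \<open>j < 2 * n\<close> by (auto simp: ambient_def w_def)
    ultimately show ?thesis
      using False \<open>j < 2 * n\<close> j that by simp
  qed
qed

lemma exists_symp_dual:
  assumes "finite B" "Z2vs.independent B" "B \<subseteq> ambient n"
    and "a \<in> ambient n" "a \<notin> Z2vs.span B"
  shows "\<exists>w\<in>sperp n B. symp n w a = 1"
  using assms
proof (induction B arbitrary: a rule: finite_induct)
  case empty
  then show ?case
    using symp_nondegenerate[of a n] Z2vs.span_empty by auto
next
  case (insert c B)
  have B: "Z2vs.independent B" "B \<subseteq> ambient n"
    using insert.hyps insert.prems Z2vs.independent_insert by auto
  have "a \<notin> Z2vs.span B"
    using insert.prems(4) Z2vs.span_mono[of B "insert c B"] by auto
  then obtain w1 where w1: "w1 \<in> sperp n B" "symp n w1 a = 1"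
    using insert.IH[OF B insert.prems(3)] by blast
  have "a + c \<notin> Z2vs.span B"
  proof
    assume "a + c \<in> Z2vs.span B"
    then have "(a + c) + c \<in> Z2vs.span (insert c B)"
      by (meson Z2vs.span_add Z2vs.span_base Z2vs.span_mono insertI1 subsetD subset_insertI)
    with insert.prems(4) show False
      by (simp add: add.assoc)
  qed
  moreover have "a + c \<in> ambient n"
    using insert.prems(2,3) subspace_ambient[of n] Z2vs.subspace_add by blast
  ultimately obtain w2 where w2: "w2 \<in> sperp n B" "symp n w2 (a + c) = 1"
    using insert.IH[OF B] by blast
  \<comment> \<open>If neither w1 nor w2 is orthogonal to c, their sum is.\<close>
  have "w1 + w2 \<in> sperp n B"
    using w1(1) w2(1) subspace_sperp Z2vs.subspace_add by blast
  then show ?case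
    using w1 w2 by (cases "symp n w1 c"; cases "symp n w2 c")
      (auto simp: sperp_def symp_add_left symp_add_right)
qed

lemma card_sperp_insert_le:
  assumes "finite B" "Z2vs.independent (insert c B)" "c \<notin> B" "insert c B \<subseteq> ambient n"
  shows "2 * card (sperp n (insert c B)) \<le> card (sperp n B)"
proof -
  obtain w where w: "w \<in> sperp n B" "symp n w c = 1"
    using exists_symp_dual[of B n c] assms Z2vs.independent_insert by auto
  let ?K = "sperp n (insert c B)" and ?T = "(\<lambda>x. x + w) ` sperp n (insert c B)"
  have fin: "finite (sperp n B)"
    using finite_ambient by (rule rev_finite_subset) (auto simp: sperp_def)
  have K: "?K \<subseteq> sperp n B"
    by (auto simp: sperp_def)
  moreover have T: "?T \<subseteq> sperp n B - ?K"
    using w K subspace_sperp[of n B] Z2vs.subspace_add[of "sperp n B"]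
    by (auto simp: sperp_def symp_add_left)
  moreover have "card ?T = card ?K"
    by (rule card_image) (auto simp: inj_on_def)
  ultimately have "2 * card ?K = card (?K \<union> ?T)"
    using fin by (subst card_Un_disjoint) (auto intro: rev_finite_subset)
  also have "\<dots> \<le> card (sperp n B)"
    using K T by (intro card_mono[OF fin]) auto
  finally show ?thesis .
qed

lemma card_sperp_independent:
  assumes "finite B" "Z2vs.independent B" "B \<subseteq> ambient n"
  shows "card (sperp n B) \<le> 2 ^ (2 * n - card B)"
  using assms
proof (induction B rule: finite_induct)
  case empty
  then show ?case by (simp add: card_ambient)
next
  case (insert c B)
  then have "2 * card (sperp n (insert c B)) \<le> 2 ^ (2 * n - card B)"
    using card_sperp_insert_le[of B c n] Z2vs.independent_insert by fastforce
  moreover have "2 * n - card (insert c B) = 2 * n - card B - 1"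
    using insert.hyps by simp
  ultimately show ?case
    by (cases "2 * n - card B") auto
qed

section \<open>Cardinalities of spans and subspaces\<close>

lemma card_span_independent:
  assumes "finite B" "Z2vs.independent B"
  shows "finite (Z2vs.span B) \<and> card (Z2vs.span B) = 2 ^ card B"
  using assms
proof (induction B rule: finite_induct)
  case empty
  then show ?case by (simp add: Z2vs.span_empty)
next
  case (insert c B)
  then have c: "c \<notin> Z2vs.span B" and IH: "finite (Z2vs.span B)" "card (Z2vs.span B) = 2 ^ card B"
    using Z2vs.independent_insert by auto
  let ?S = "Z2vs.span B"
  have span_insert: "Z2vs.span (insert c B) = ?S \<union> (\<lambda>x. x + c) ` ?S"
  proof (intro subset_antisym subsetI)
    fix x assume "x \<in> Z2vs.span (insert c B)"
    then obtain k where k: "x + scaleZ2 k c \<in> ?S"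
      by (auto simp: Z2vs.span_insert minus_bit_fun_eq_plus)
    then show "x \<in> ?S \<union> (\<lambda>x. x + c) ` ?S"
      by (cases k) (auto simp: image_iff add.assoc intro!: bexI[of _ "x + c"])
  next
    fix x assume "x \<in> ?S \<union> (\<lambda>x. x + c) ` ?S"
    then show "x \<in> Z2vs.span (insert c B)"
      by (auto intro: Z2vs.span_add Z2vs.span_base Z2vs.span_mono[of B, THEN subsetD])
  qed
  have "?S \<inter> (\<lambda>x. x + c) ` ?S = {}"
  proof (rule ccontr)
    assume "?S \<inter> (\<lambda>x. x + c) ` ?S \<noteq> {}"
    then obtain y where "y \<in> ?S" "y + c \<in> ?S" by blast
    then have "y + (y + c) \<in> ?S" by (rule Z2vs.span_add)
    with c show False by (simp flip: add.assoc)
  qed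
  moreover have "card ((\<lambda>x. x + c) ` ?S) = card ?S"
    by (rule card_image) (auto simp: inj_on_def)
  ultimately show ?case
    using IH insert.hyps by (simp add: span_insert card_Un_disjoint)
qed

lemma card_subspace:
  assumes "subspZ2 W" "W \<subseteq> ambient n"
  shows "finite W" "card W = 2 ^ dimZ2 W"
proof -
  obtain B where B: "B \<subseteq> W" "Z2vs.independent B" "W \<subseteq> Z2vs.span B" "card B = dimZ2 W"
    by (rule Z2vs.basis_exists[of W])
  have "finite B"
    using B(1) assms(2) finite_ambient by (meson finite_subset)
  moreover have "Z2vs.span B = W"
    using B assms(1) by (intro Z2vs.span_subspace) auto
  ultimately show "finite W" "card W = 2 ^ dimZ2 W"
    using card_span_independent[of B] B by auto
qed

lemma dim_mono_ambient:
  assumes "W \<subseteq> V" "V \<subseteq> ambient n"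
  shows "dimZ2 W \<le> dimZ2 V"
proof -
  obtain B where B: "B \<subseteq> V" "V \<subseteq> Z2vs.span B" "card B = dimZ2 V"
    by (rule Z2vs.basis_exists[of V])
  have "finite B"
    using B(1) assms(2) finite_ambient by (rule finite_subset[OF order.trans])
  moreover have "W \<subseteq> Z2vs.span B"
    using assms(1) B(2) by (rule order.trans)
  ultimately show ?thesis
    using Z2vs.dim_le_card[of W B] B(3) by simp
qed

lemma dim_ambient: "dimZ2 (ambient n) = 2 * n"
  using card_subspace[OF subspace_ambient order.refl] card_ambient by simp

lemma card_subspace_diff_span_ge:
  assumes "subspZ2 W" "W \<subseteq> ambient n" "set ys \<subseteq> W" "Z2vs.independent (set ys)" "distinct ys"
    and "length ys < d" "d \<le> dimZ2 W"
  shows "finite (W - Z2vs.span (set ys)) \<and> 2 ^ (d - 1) \<le> card (W - Z2vs.span (set ys))"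
proof -
  have span: "Z2vs.span (set ys) \<subseteq> W"
    by (rule Z2vs.span_minimal[OF assms(3,1)])
  have card_diff: "card (W - Z2vs.span (set ys)) = 2 ^ dimZ2 W - 2 ^ length ys"
    using card_subspace[OF assms(1,2)] card_span_independent[of "set ys"] assms(4,5) span
    by (simp add: card_Diff_subset distinct_card)
  have "(2::nat) ^ length ys \<le> 2 ^ (d - 1)"
    using assms(6) by (intro power_increasing) auto
  moreover have "2 * 2 ^ (d - 1) \<le> (2::nat) ^ dimZ2 W"
    using assms(6,7) by (simp add: power_Suc[symmetric] del: power_Suc)
  ultimately have "2 ^ (d - 1) \<le> card (W - Z2vs.span (set ys))"
    unfolding card_diff by linarith
  then show ?thesis
    using card_subspace(1)[OF assms(1,2)] by simp
qed

section \<open>Lists built by successive choices\<close>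

definition choice_lists :: "('a list \<Rightarrow> 'a set) \<Rightarrow> nat \<Rightarrow> 'a list set" where
  "choice_lists A t = {xs. length xs = t \<and> (\<forall>i<t. xs ! i \<in> A (take i xs))}"

lemma length_choice_lists: "xs \<in> choice_lists A t \<Longrightarrow> length xs = t"
  by (simp add: choice_lists_def)

lemma choice_lists_0 [simp]: "choice_lists A 0 = {[]}"
  by (auto simp: choice_lists_def)

lemma choice_lists_Suc:
  "choice_lists A (Suc t) = (\<lambda>(ys, x). ys @ [x]) ` (SIGMA ys:choice_lists A t. A ys)"
proof (intro subset_antisym subsetI)
  fix xs assume xs: "xs \<in> choice_lists A (Suc t)"
  then have "xs = take t xs @ [xs ! t]"
    by (simp add: choice_lists_def take_Suc_conv_app_nth[symmetric])
  moreover have "take t xs \<in> choice_lists A t" "xs ! t \<in> A (take t xs)"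
    using xs by (auto simp: choice_lists_def)
  ultimately show "xs \<in> (\<lambda>(ys, x). ys @ [x]) ` (SIGMA ys:choice_lists A t. A ys)"
    by (metis (no_types, lifting) SigmaI case_prod_conv image_eqI)
next
  fix xs assume "xs \<in> (\<lambda>(ys, x). ys @ [x]) ` (SIGMA ys:choice_lists A t. A ys)"
  then show "xs \<in> choice_lists A (Suc t)"
    by (auto simp: choice_lists_def nth_append less_Suc_eq)
qed

lemma take_in_choice_lists:
  "xs \<in> choice_lists A t \<Longrightarrow> take j xs \<in> choice_lists A (min j t)"
  by (auto simp: choice_lists_def)

lemma set_choice_lists_subset:
  assumes "xs \<in> choice_lists A t" "\<And>ys. length ys < t \<Longrightarrow> A ys \<subseteq> C"
  shows "set xs \<subseteq> C"
proof
  fix x assume "x \<in> set xs"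
  then obtain i where "i < t" "x = xs ! i"
    using assms(1) by (auto simp: choice_lists_def in_set_conv_nth)
  then have "x \<in> A (take i xs)"
    using assms(1) by (simp add: choice_lists_def)
  moreover have "length (take i xs) < t"
    using assms(1) \<open>i < t\<close> by (simp add: length_choice_lists)
  ultimately show "x \<in> C"
    using assms(2) by blast
qed

lemma card_choice_lists_Suc:
  assumes "finite (choice_lists A t)" "\<And>ys. ys \<in> choice_lists A t \<Longrightarrow> finite (A ys)"
  shows "finite (choice_lists A (Suc t))"
    and "card (choice_lists A (Suc t)) = (\<Sum>ys\<in>choice_lists A t. card (A ys))"
proof -
  have "inj_on (\<lambda>(ys, x). ys @ [x]) (SIGMA ys:choice_lists A t. A ys)"
    by (auto simp: inj_on_def)
  then show "finite (choice_lists A (Suc t))"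
    and "card (choice_lists A (Suc t)) = (\<Sum>ys\<in>choice_lists A t. card (A ys))"
    using assms by (simp_all add: choice_lists_Suc card_image card_SigmaI)
qed

lemma prod_le_card_choice_lists:
  assumes "\<And>i ys. i < t \<Longrightarrow> ys \<in> choice_lists A i \<Longrightarrow> finite (A ys) \<and> c i \<le> card (A ys)"
  shows "finite (choice_lists A t) \<and> (\<Prod>i<t. c i) \<le> card (choice_lists A t)"
  using assms
proof (induction t)
  case 0
  then show ?case by simp
next
  case (Suc t)
  then have IH: "finite (choice_lists A t)" "(\<Prod>i<t. c i) \<le> card (choice_lists A t)"
    by (meson less_SucI)+
  have A: "\<And>ys. ys \<in> choice_lists A t \<Longrightarrow> finite (A ys) \<and> c t \<le> card (A ys)"
    using Suc.prems by blast
  have "(\<Prod>i<Suc t. c i) \<le> card (choice_lists A t) * c t"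
    using IH(2) by simp
  also have "\<dots> \<le> (\<Sum>ys\<in>choice_lists A t. card (A ys))"
    using A sum_mono[of "choice_lists A t" "\<lambda>_. c t"] by simp
  finally show ?case
    using card_choice_lists_Suc[OF IH(1)] A by simp
qed

lemma card_choice_lists_le_prod:
  assumes "\<And>i ys. i < t \<Longrightarrow> ys \<in> choice_lists A i \<Longrightarrow> finite (A ys) \<and> card (A ys) \<le> c i"
  shows "finite (choice_lists A t) \<and> card (choice_lists A t) \<le> (\<Prod>i<t. c i)"
  using assms
proof (induction t)
  case 0
  then show ?case by simp
next
  case (Suc t)
  then have IH: "finite (choice_lists A t)" "card (choice_lists A t) \<le> (\<Prod>i<t. c i)"
    by (meson less_SucI)+
  have A: "\<And>ys. ys \<in> choice_lists A t \<Longrightarrow> finite (A ys) \<and> card (A ys) \<le> c t"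
    using Suc.prems by blast
  have "(\<Sum>ys\<in>choice_lists A t. card (A ys)) \<le> card (choice_lists A t) * c t"
    using A sum_mono[of "choice_lists A t" _ "\<lambda>_. c t"] by simp
  also have "\<dots> \<le> (\<Prod>i<Suc t. c i)"
    using IH(2) by simp
  finally show ?case
    using card_choice_lists_Suc[OF IH(1)] A by simp
qed

lemma choice_lists_independent:
  assumes "xs \<in> choice_lists A t" "\<And>ys. length ys < t \<Longrightarrow> A ys \<inter> Z2vs.span (set ys) = {}"
  shows "Z2vs.independent (set xs) \<and> distinct xs"
  using assms
proof (induction t arbitrary: xs)
  case 0
  then show ?case by (simp add: Z2vs.independent_empty)
next
  case (Suc t)
  then obtain ys x where xs: "xs = ys @ [x]" "ys \<in> choice_lists A t" "x \<in> A ys"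
    by (auto simp: choice_lists_Suc)
  moreover have "length ys < Suc t"
    using length_choice_lists[OF xs(2)] by simp
  ultimately have "x \<notin> Z2vs.span (set ys)"
    using Suc.prems(2) by blast
  moreover have "Z2vs.independent (set ys) \<and> distinct ys"
    using Suc.IH[OF xs(2)] Suc.prems(2) by simp
  ultimately show ?case
    using xs(1) Z2vs.independent_insertI Z2vs.span_base by fastforce
qed

section \<open>Counting subspaces by their ordered bases\<close>

lemma finite_subspaces_dim: "finite (subspaces_dim n m)"
  by (rule finite_subset[of _ "Pow (ambient n)"]) (auto simp: subspaces_dim_def finite_ambient)

lemma span_in_subspaces_dim:
  assumes "set xs \<subseteq> ambient n" "Z2vs.independent (set xs)" "distinct xs"
  shows "Z2vs.span (set xs) \<in> subspaces_dim n (length xs)"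
  using assms Z2vs.span_minimal[OF assms(1) subspace_ambient]
  by (simp add: subspaces_dim_def Z2vs.subspace_span Z2vs.dim_eq_card_independent distinct_card)

lemma card_subspaces_dim_ge:
  assumes "m \<le> 2 * n"
  shows "2 ^ (m * (2 * n - 1)) \<le> card (subspaces_dim n m) * 2 ^ (m * m)"
proof -
  define A where "A ys = ambient n - Z2vs.span (set ys)" for ys
  have indep: "Z2vs.independent (set ys) \<and> distinct ys" and amb: "set ys \<subseteq> ambient n"
    if "ys \<in> choice_lists A i" for ys i
    using choice_lists_independent[OF that] set_choice_lists_subset[OF that] by (auto simp: A_def)
  have "finite (choice_lists A m) \<and> (\<Prod>i<m. 2 ^ (2 * n - 1)) \<le> card (choice_lists A m)"
  proof (rule prod_le_card_choice_lists)
    fix i ys assume "i < m" and ys: "ys \<in> choice_lists A i"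
    then show "finite (A ys) \<and> 2 ^ (2 * n - 1) \<le> card (A ys)"
      using assms indep[OF ys] amb[OF ys] length_choice_lists[OF ys]
        card_subspace_diff_span_ge[OF subspace_ambient order.refl,
          where n = n and ys = ys and d = "2 * n"]
      by (simp add: A_def dim_ambient)
  qed
  then have "2 ^ (m * (2 * n - 1)) \<le> card (choice_lists A m)"
    by (simp add: power_mult[symmetric] mult.commute)
  also have "\<dots> \<le> card (\<Union>V\<in>subspaces_dim n m. {xs. set xs \<subseteq> V \<and> length xs = m})"
  proof (rule card_mono)
    show "finite (\<Union>V\<in>subspaces_dim n m. {xs. set xs \<subseteq> V \<and> length xs = m})"
      using finite_subspaces_dim finite_ambient
      by (auto simp: subspaces_dim_def intro!: finite_lists_length_eq intro: finite_subset)
    show "choice_lists A m \<subseteq> (\<Union>V\<in>subspaces_dim n m. {xs. set xs \<subseteq> V \<and> length xs = m})"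
      using indep amb span_in_subspaces_dim length_choice_lists Z2vs.span_superset by fast
  qed
  also have "\<dots> \<le> (\<Sum>V\<in>subspaces_dim n m. card {xs. set xs \<subseteq> V \<and> length xs = m})"
    using finite_subspaces_dim by (rule card_UN_le)
  also have "\<dots> = card (subspaces_dim n m) * 2 ^ (m * m)"
  proof -
    have "card {xs. set xs \<subseteq> V \<and> length xs = m} = 2 ^ (m * m)" if "V \<in> subspaces_dim n m" for V
      using that card_subspace[of V n] by (simp add: subspaces_dim_def card_lists_length_eq power_mult)
    then show ?thesis by simp
  qed
  finally show ?thesis .
qed

definition adapted_bases :: "nat \<Rightarrow> nat \<Rightarrow> nat \<Rightarrow> (nat \<Rightarrow> bit) set \<Rightarrow> (nat \<Rightarrow> bit) list set" where
  "adapted_bases n k m V =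
     choice_lists (\<lambda>ys. (if length ys < k then rad n V else V) - Z2vs.span (set ys)) m"

definition partly_isotropic_lists :: "nat \<Rightarrow> nat \<Rightarrow> nat \<Rightarrow> (nat \<Rightarrow> bit) list set" where
  "partly_isotropic_lists n k m =
     choice_lists
       (\<lambda>ys. {x \<in> sperp n (set (take k ys)). length ys < k \<longrightarrow> x \<notin> Z2vs.span (set ys)}) m"

lemma adapted_basesD:
  assumes "xs \<in> adapted_bases n k m V"
  shows "Z2vs.independent (set xs)" "distinct xs" "set xs \<subseteq> V" "set (take k xs) \<subseteq> rad n V"
proof -
  have "take k xs \<in> adapted_bases n k (min k m) V"
    using assms take_in_choice_lists by (simp add: adapted_bases_def)
  then show "set (take k xs) \<subseteq> rad n V"
    unfolding adapted_bases_def by (rule set_choice_lists_subset) auto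
  show "set xs \<subseteq> V"
    using assms unfolding adapted_bases_def by (rule set_choice_lists_subset) (auto simp: rad_def)
  show "Z2vs.independent (set xs)" "distinct xs"
    using assms unfolding adapted_bases_def by (blast dest: choice_lists_independent)+
qed

lemma card_adapted_bases_ge:
  assumes V: "V \<in> subspaces_dim n m" and k: "k \<le> dimZ2 (rad n V)"
  shows "finite (adapted_bases n k m V)
    \<and> 2 ^ (\<Sum>i<m. if i < k then k - 1 else m - 1) \<le> card (adapted_bases n k m V)"
proof -
  have V_sub: "subspZ2 V" "V \<subseteq> ambient n" "dimZ2 V = m"
    using V by (auto simp: subspaces_dim_def)
  have rad_sub: "subspZ2 (rad n V)" "rad n V \<subseteq> ambient n"
    using subspace_rad[OF V_sub(1)] V_sub(2) by (auto simp: rad_def)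
  define A where "A ys = (if length ys < k then rad n V else V) - Z2vs.span (set ys)" for ys
  have adapted_eq: "adapted_bases n k i V = choice_lists A i" for i
    by (simp add: adapted_bases_def A_def[abs_def])
  have "finite (choice_lists A m)
    \<and> (\<Prod>i<m. 2 ^ (if i < k then k - 1 else m - 1)) \<le> card (choice_lists A m)"
  proof (rule prod_le_card_choice_lists)
    fix i ys assume i: "i < m" and ys: "ys \<in> choice_lists A i"
    note props = adapted_basesD[of ys n k i V]
    have len: "length ys = i"
      using ys by (rule length_choice_lists)
    show "finite (A ys) \<and> 2 ^ (if i < k then k - 1 else m - 1) \<le> card (A ys)"
    proof (cases "i < k")
      case True
      then show ?thesis
        using card_subspace_diff_span_ge[OF rad_sub, of ys k] props ys len k
        by (simp add: A_def adapted_eq)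
    next
      case False
      then show ?thesis
        using card_subspace_diff_span_ge[OF V_sub(1,2), of ys m] props ys len i V_sub(3)
        by (simp add: A_def adapted_eq)
    qed
  qed
  then show ?thesis
    by (simp add: adapted_eq power_sum)
qed

lemma span_adapted_basis:
  assumes "V \<in> subspaces_dim n m" "xs \<in> adapted_bases n k m V"
  shows "Z2vs.span (set xs) = V"
proof -
  have V: "subspZ2 V" "V \<subseteq> ambient n" "dimZ2 V = m"
    using assms(1) by (auto simp: subspaces_dim_def)
  note props = adapted_basesD[OF assms(2)]
  have "Z2vs.span (set xs) \<subseteq> V"
    using Z2vs.span_minimal[OF props(3) V(1)] .
  moreover have "card (Z2vs.span (set xs)) = card V"
    using card_span_independent[of "set xs"] card_subspace[OF V(1,2)] props(1,2) V(3)
      length_choice_lists[of xs _ m] assms(2)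
    by (simp add: adapted_bases_def distinct_card)
  ultimately show ?thesis
    using card_subspace(1)[OF V(1,2)] by (simp add: card_subset_eq)
qed

lemma adapted_bases_subset_partly_isotropic:
  assumes "V \<in> subspaces_dim n m"
  shows "adapted_bases n k m V \<subseteq> partly_isotropic_lists n k m"
proof
  fix xs assume xs: "xs \<in> adapted_bases n k m V"
  note props = adapted_basesD[OF xs]
  have V_amb: "V \<subseteq> ambient n"
    using assms by (simp add: subspaces_dim_def)
  have "xs ! i \<in> sperp n (set (take k (take i xs)))" if "i < m" for i
  proof -
    have "xs ! i \<in> V"
      using props(3) xs that by (auto simp: adapted_bases_def length_choice_lists)
    moreover have "set (take k (take i xs)) \<subseteq> rad n V"
      using props(4) by (metis min.commute order.trans set_take_subset_set_take take_take min.cobounded1)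
    ultimately show ?thesis
      using V_amb by (auto simp: sperp_def rad_def symp_commute)
  qed
  then show "xs \<in> partly_isotropic_lists n k m"
    using xs by (auto simp: adapted_bases_def partly_isotropic_lists_def choice_lists_def)
qed

lemma card_partly_isotropic_lists_le:
  "finite (partly_isotropic_lists n k m)
    \<and> card (partly_isotropic_lists n k m) \<le> 2 ^ (\<Sum>i<m. 2 * n - min i k)"
proof -
  define A where
    "A ys = {x \<in> sperp n (set (take k ys)). length ys < k \<longrightarrow> x \<notin> Z2vs.span (set ys)}" for ys
  have "finite (choice_lists A m) \<and> card (choice_lists A m) \<le> (\<Prod>i<m. 2 ^ (2 * n - min i k))"
  proof (rule card_choice_lists_le_prod)
    fix i ys assume "i < m" and ys: "ys \<in> choice_lists A i"
    then have prefix: "take k ys \<in> choice_lists A (min i k)"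
      using take_in_choice_lists[OF ys, of k] by (simp add: min.commute)
    have "Z2vs.independent (set (take k ys)) \<and> distinct (take k ys)"
      using prefix by (rule choice_lists_independent) (auto simp: A_def)
    moreover have "set (take k ys) \<subseteq> ambient n"
      using prefix by (rule set_choice_lists_subset) (auto simp: A_def sperp_def)
    moreover have "length (take k ys) = min i k"
      using length_choice_lists[OF prefix] .
    ultimately have "card (sperp n (set (take k ys))) \<le> 2 ^ (2 * n - min i k)"
      using card_sperp_independent[of "set (take k ys)" n] by (simp add: distinct_card)
    moreover have "finite (sperp n (set (take k ys)))"
      using finite_ambient by (rule rev_finite_subset) (auto simp: sperp_def)
    moreover have "A ys \<subseteq> sperp n (set (take k ys))"
      by (auto simp: A_def)
    ultimately show "finite (A ys) \<and> card (A ys) \<le> 2 ^ (2 * n - min i k)"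
      by (meson card_mono finite_subset order.trans)
  qed
  then show ?thesis
    by (simp add: partly_isotropic_lists_def A_def[abs_def] power_sum)
qed

lemma card_large_radical_le:
  "card {V \<in> subspaces_dim n m. k \<le> dimZ2 (rad n V)} * 2 ^ (\<Sum>i<m. if i < k then k - 1 else m - 1)
    \<le> 2 ^ (\<Sum>i<m. 2 * n - min i k)"
proof -
  let ?Bad = "{V \<in> subspaces_dim n m. k \<le> dimZ2 (rad n V)}"
  have fin: "finite ?Bad"
    using finite_subspaces_dim by simp
  note adapted = card_adapted_bases_ge[of _ n m k]
  note isotropic = card_partly_isotropic_lists_le[of n k m]
  have "card ?Bad * 2 ^ (\<Sum>i<m. if i < k then k - 1 else m - 1)
      = (\<Sum>V\<in>?Bad. 2 ^ (\<Sum>i<m. if i < k then k - 1 else m - 1))"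
    by simp
  also have "\<dots> \<le> (\<Sum>V\<in>?Bad. card (adapted_bases n k m V))"
    using adapted by (intro sum_mono) auto
  also have "\<dots> = card (\<Union>V\<in>?Bad. adapted_bases n k m V)"
  proof (rule card_UN_disjoint[symmetric])
    show "\<forall>V\<in>?Bad. \<forall>W\<in>?Bad. V \<noteq> W \<longrightarrow> adapted_bases n k m V \<inter> adapted_bases n k m W = {}"
      using span_adapted_basis by blast
  qed (use fin adapted in auto)
  also have "\<dots> \<le> card (partly_isotropic_lists n k m)"
    using isotropic adapted_bases_subset_partly_isotropic by (intro card_mono) blast+
  also have "\<dots> \<le> 2 ^ (\<Sum>i<m. 2 * n - min i k)"
    using isotropic by simp
  finally show ?thesis .
qed

lemma large_radical_exponent_eq:
  assumes "k \<le> m" "m \<le> 2 * n"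
  shows "real (\<Sum>i<m. 2 * n - min i k) - real (\<Sum>i<m. if i < k then k - 1 else m - 1)
      - real (m * (2 * n - 1)) + real (m * m)
    = 2 * real m - real k * (real k - 1) / 2" (is "?lhs = _")
proof -
  have gauss: "(\<Sum>i<k. real i) = real k * (real k - 1) / 2"
    by (induction k) (simp_all add: field_simps)
  have "?lhs = (\<Sum>i<m. real (2 * n - min i k) - real (if i < k then k - 1 else m - 1)
      - real (2 * n - 1) + real m)"
    by (simp add: of_nat_sum sum.distrib sum_subtractf del: of_nat_diff)
  also have "\<dots> = (\<Sum>i<m. 2 - real k + (if i < k then real m - real i else 0))"
    using assms by (intro sum.cong) (auto simp: of_nat_diff)
  also have "\<dots> = real m * (2 - real k) + (\<Sum>i<k. real m - real i)"
  proof -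
    have "{..<m} \<inter> {i. i < k} = {..<k}"
      using assms(1) by auto
    then show ?thesis
      by (simp add: sum.distrib sum.If_cases)
  qed
  also have "\<dots> = 2 * real m - real k * (real k - 1) / 2"
    using gauss by (simp add: sum_subtractf algebra_simps)
  finally show ?thesis .
qed

lemma large_radical_ratio_le:
  assumes "k \<le> m" "m \<le> 2 * n"
  shows "real (card {V \<in> subspaces_dim n m. k \<le> dimZ2 (rad n V)}) / real (card (subspaces_dim n m))
    \<le> 2 powr (2 * real m - real k * (real k - 1) / 2)"
proof -
  define T where "T = (\<Sum>i<m. 2 * n - min i k)"
  define G where "G = (\<Sum>i<m. if i < k then k - 1 else m - 1)"
  define P where "P = m * (2 * n - 1)"
  define Q where "Q = m * m"
  let ?Bad = "{V \<in> subspaces_dim n m. k \<le> dimZ2 (rad n V)}" and ?S = "subspaces_dim n m"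
  have "real (card ?Bad * 2 ^ G) \<le> real (2 ^ T)"
    unfolding of_nat_le_iff T_def G_def by (rule card_large_radical_le)
  then have Bad: "real (card ?Bad) \<le> 2 powr (real T - real G)"
    by (simp add: powr_diff powr_realpow divide_simps)
  have "real (2 ^ P) \<le> real (card ?S * 2 ^ Q)"
    unfolding of_nat_le_iff P_def Q_def using assms(2) by (rule card_subspaces_dim_ge)
  then have S: "2 powr (real P - real Q) \<le> real (card ?S)"
    by (simp add: powr_diff powr_realpow divide_simps)
  have "real (card ?Bad) / real (card ?S) \<le> 2 powr (real T - real G) / 2 powr (real P - real Q)"
    using Bad S by (intro frac_le) auto
  also have "\<dots> = 2 powr (real T - real G - real P + real Q)"
    by (simp add: powr_diff [symmetric] algebra_simps)
  also have "\<dots> = 2 powr (2 * real m - real k * (real k - 1) / 2)"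
    using large_radical_exponent_eq[OF assms] by (simp add: T_def G_def P_def Q_def)
  finally show ?thesis .
qed

lemma large_radical_ratio_le_powr:
  fixes r :: real
  assumes "0 \<le> r"
  shows "real (card {V \<in> subspaces_dim n m. r \<le> real (dimZ2 (rad n V))})
      / real (card (subspaces_dim n m))
    \<le> 2 powr (5 * real n - r\<^sup>2 / 2)"
proof -
  define k where "k = nat \<lceil>r\<rceil>"
  have r_le_k: "r \<le> real k"
    unfolding k_def by (rule real_nat_ceiling_ge)
  have Bad_eq: "{V \<in> subspaces_dim n m. r \<le> real (dimZ2 (rad n V))}
      = {V \<in> subspaces_dim n m. k \<le> dimZ2 (rad n V)}"
    by (auto simp: k_def nat_le_iff ceiling_le_iff)
  show ?thesis
  proof (cases "{V \<in> subspaces_dim n m. k \<le> dimZ2 (rad n V)} = {}")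
    case True
    show ?thesis
      unfolding Bad_eq True by simp
  next
    case False
    then obtain V where V: "V \<in> subspaces_dim n m" "k \<le> dimZ2 (rad n V)"
      by blast
    then have "V \<subseteq> ambient n" "dimZ2 V = m"
      by (auto simp: subspaces_dim_def)
    then have "k \<le> m" "m \<le> 2 * n"
      using V(2) dim_mono_ambient[of "rad n V" V n] dim_mono_ambient[of V "ambient n" n]
      by (auto simp: rad_def dim_ambient)
    then have "real (card {V \<in> subspaces_dim n m. k \<le> dimZ2 (rad n V)})
        / real (card (subspaces_dim n m))
      \<le> 2 powr (2 * real m - real k * (real k - 1) / 2)"
      by (rule large_radical_ratio_le)
    also have "\<dots> \<le> 2 powr (5 * real n - r\<^sup>2 / 2)"
    proof (rule powr_mono)
      have "r\<^sup>2 \<le> real k * real k"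
        using assms r_le_k by (simp add: power2_eq_square mult_mono)
      moreover have "real k \<le> real m" "real m \<le> 2 * real n"
        using \<open>k \<le> m\<close> \<open>m \<le> 2 * n\<close> by simp_all
      moreover have "real k * (real k - 1) = real k * real k - real k"
        by (simp add: right_diff_distrib)
      ultimately show "2 * real m - real k * (real k - 1) / 2 \<le> 5 * real n - r\<^sup>2 / 2"
        by linarith
    qed simp
    finally show ?thesis
      by (simp add: Bad_eq)
  qed
qed

theorem lemmaD6:
  fixes \<epsilon> \<alpha> :: real
  assumes "\<epsilon> > 0" and "\<alpha> > 0"
  shows "\<exists>\<delta>>0. \<exists>N. \<forall>n\<ge>N. \<forall>m::nat. real m \<ge> \<alpha> * real n \<longrightarrow>
           real (card {V \<in> subspaces_dim n m. real (dimZ2 (rad n V)) \<ge> \<epsilon> * real n})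
             / real (card (subspaces_dim n m))
           \<le> 2 powr (- \<delta> * (real n)^2)"
proof (intro exI[of _ "\<epsilon>\<^sup>2 / 4"] conjI exI[of _ "nat \<lceil>20 / \<epsilon>\<^sup>2\<rceil>"] allI impI)
  show "\<epsilon>\<^sup>2 / 4 > 0"
    using assms(1) by simp
  fix n m :: nat
  assume "n \<ge> nat \<lceil>20 / \<epsilon>\<^sup>2\<rceil>"
  then have "20 \<le> \<epsilon>\<^sup>2 * real n"
    using assms(1) by (simp add: nat_le_iff ceiling_le_iff field_simps)
  then have n_large: "20 * real n \<le> \<epsilon>\<^sup>2 * real n * real n"
    by (simp add: mult_right_mono)
  \<comment> \<open>The bound holds for every m.\<close>
  have "real (card {V \<in> subspaces_dim n m. \<epsilon> * real n \<le> real (dimZ2 (rad n V))})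
      / real (card (subspaces_dim n m)) \<le> 2 powr (5 * real n - (\<epsilon> * real n)\<^sup>2 / 2)"
    using assms(1) by (intro large_radical_ratio_le_powr) simp
  also have "\<dots> \<le> 2 powr (- (\<epsilon>\<^sup>2 / 4) * (real n)\<^sup>2)"
    using n_large by (intro powr_mono) (simp_all add: power2_eq_square algebra_simps)
  finally show "real (card {V \<in> subspaces_dim n m. real (dimZ2 (rad n V)) \<ge> \<epsilon> * real n})
      / real (card (subspaces_dim n m)) \<le> 2 powr (- (\<epsilon>\<^sup>2 / 4) * (real n)\<^sup>2)" .
qed

end
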